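(* Let $\sigma:\mathbb{R}\to\mathbb{R}$ be an increasing odd homeomorphism such that either $\sigma(x)=x$ for all $x$ in a neighborhood of $0$, or $\sigma(x)=x$ for all $x\in\mathbb{Z}$. Let $h(x,y)=(x+y,y)$, $v(x,y)=(x,x+y)$, so that $\Gamma(\mathrm{Id})=\langle h,v\rangle=\mathrm{SL}(2,\mathbb{Z})$. Then: (1) there is a surjective group morphism $\pi:\Gamma(\sigma)\to\Gamma(\mathrm{Id})$ with $\pi(w(h_\sigma,v_\sigma))=w(h,v)$ for every word $w$ in the free group on two letters; (2) the kernel of $\pi$ is the normal subgroup of $\Gamma(\sigma)$ generated by $V_\sigma^2U_\sigma^3$ and $V_\sigma^4$, where $U_\sigma=v_\sigma^{-1}h_\sigma$ and $V_\sigma=h_\sigma^{-1}v_\sigma h_\sigma^{-1}$.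
   Context: $h_\sigma(x,y)=(x+\sigma^{-1}(y),y)$, $v_\sigma(x,y)=(x,\sigma(x)+y)$, and $\Gamma(\sigma)$ is the group generated by $h_\sigma,v_\sigma$ under composition. For a word $w$ in the free group $\mathbb F(a,b)$ and elements $x,y$ of a group, $w(x,y)$ denotes the image of $w$ under the morphism $a\mapsto x$, $b\mapsto y$. *)

theory Defs
  imports "HOL-Analysis.Analysis" "HOL-Algebra.Algebra"
begin

definition hmap :: "(real \<Rightarrow> real) \<Rightarrow> real \<times> real \<Rightarrow> real \<times> real" where
  "hmap \<sigma> = (\<lambda>(x, y). (x + inv_into UNIV \<sigma> y, y))"

definition vmap :: "(real \<Rightarrow> real) \<Rightarrow> real \<times> real \<Rightarrow> real \<times> real" where
  "vmap \<sigma> = (\<lambda>(x, y). (x, \<sigma> x + y))"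

definition Gamma :: "(real \<Rightarrow> real) \<Rightarrow> (real \<times> real \<Rightarrow> real \<times> real) monoid" where
  "Gamma \<sigma> = (BijGroup (UNIV :: (real \<times> real) set))
      \<lparr>carrier := generate (BijGroup (UNIV :: (real \<times> real) set)) {hmap \<sigma>, vmap \<sigma>}\<rparr>"

(* Words of the free group F(a,b): a word is a list of letters (a or b) each
   with an exponent sign (True = inverse letter). *)
datatype letter = LA | LB

type_synonym word = "(letter \<times> bool) list"

fun eval_letter :: "('g, 'm) monoid_scheme \<Rightarrow> 'g \<Rightarrow> 'g \<Rightarrow> letter \<times> bool \<Rightarrow> 'g" where
  "eval_letter G x y (LA, False) = x"
| "eval_letter G x y (LA, True) = inv\<^bsub>G\<^esub> x"
| "eval_letter G x y (LB, False) = y"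
| "eval_letter G x y (LB, True) = inv\<^bsub>G\<^esub> y"

definition word_eval :: "('g, 'm) monoid_scheme \<Rightarrow> word \<Rightarrow> 'g \<Rightarrow> 'g \<Rightarrow> 'g" where
  "word_eval G w x y = foldr (\<lambda>l acc. eval_letter G x y l \<otimes>\<^bsub>G\<^esub> acc) w \<one>\<^bsub>G\<^esub>"

definition normal_closure :: "('g, 'm) monoid_scheme \<Rightarrow> 'g set \<Rightarrow> 'g set" where
  "normal_closure G S =
     generate G {g \<otimes>\<^bsub>G\<^esub> s \<otimes>\<^bsub>G\<^esub> inv\<^bsub>G\<^esub> g | g s. g \<in> carrier G \<and> s \<in> S}"

end

theory Submission
  imports Defs
begin

(* When sigma fixes a
   neighbourhood of 0 (resp. the integers), h_sigma and v_sigma agree with h and v near 0 (resp. on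
   Z^2), and h, v map small points to small points (integer points to integer points); so
   w(h_sigma, v_sigma) agrees with the linear map w(h, v) at (t, 0) and (0, t) for some t > 0.
   These two values determine w(h, v), hence w(h_sigma, v_sigma) |-> w(h, v) is a well defined
   surjective morphism.
   For the kernel: h = V U^2 and v = V U, so modulo V^4 = V^2 U^3 = 1 every word reduces to a
   normal form V^(2e) U^k (V U^t1) ... (V U^tn) V^f.  In SL(2,Z) the factors V U and V U^2 are the
   positive shears, which strictly enlarge (1, 1); hence only the empty normal form evaluates to the
   identity, and a word in the kernel is already trivial modulo the normal closure of the relators. *)

lemma word_eval_Nil [simp]: "word_eval G [] x y = \<one>\<^bsub>G\<^esub>"
  by (simp add: word_eval_def)

lemma word_eval_Cons [simp]:
  "word_eval G (l # w) x y = eval_letter G x y l \<otimes>\<^bsub>G\<^esub> word_eval G w x y"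
  by (simp add: word_eval_def)

context group
begin

lemma eval_letter_closed [simp]:
  "x \<in> carrier G \<Longrightarrow> y \<in> carrier G \<Longrightarrow> eval_letter G x y l \<in> carrier G"
  by (cases "(G, x, y, l)" rule: eval_letter.cases) auto

lemma word_eval_closed [simp]:
  "x \<in> carrier G \<Longrightarrow> y \<in> carrier G \<Longrightarrow> word_eval G w x y \<in> carrier G"
  by (induction w) auto

lemma m_inv_cancel_left [simp]: "x \<in> carrier G \<Longrightarrow> y \<in> carrier G \<Longrightarrow> x \<otimes> (inv x \<otimes> y) = y"
  by (simp add: m_assoc[symmetric])

lemma inv_m_cancel_left [simp]: "x \<in> carrier G \<Longrightarrow> y \<in> carrier G \<Longrightarrow> inv x \<otimes> (x \<otimes> y) = y"
  by (simp add: m_assoc[symmetric])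

lemma word_eval_append:
  "x \<in> carrier G \<Longrightarrow> y \<in> carrier G \<Longrightarrow>
    word_eval G (w1 @ w2) x y = word_eval G w1 x y \<otimes> word_eval G w2 x y"
  by (induction w1) (auto simp: m_assoc)

lemma generate_eq_word_evals:
  assumes x: "x \<in> carrier G" and y: "y \<in> carrier G"
  shows "generate G {x, y} = range (\<lambda>w. word_eval G w x y)"
proof
  show "generate G {x, y} \<subseteq> range (\<lambda>w. word_eval G w x y)"
  proof
    fix g assume "g \<in> generate G {x, y}"
    then show "g \<in> range (\<lambda>w. word_eval G w x y)"
    proof (induction rule: generate.induct)
      case one
      show ?case using word_eval_Nil by (metis rangeI)
    next
      case (incl g)
      then have "g = word_eval G [(LA, False)] x y \<or> g = word_eval G [(LB, False)] x y"
        using x y by auto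
      then show ?case by blast
    next
      case (inv g)
      then have "inv g = word_eval G [(LA, True)] x y \<or> inv g = word_eval G [(LB, True)] x y"
        using x y by auto
      then show ?case by blast
    next
      case (eng g1 g2)
      then obtain w1 w2 where "g1 = word_eval G w1 x y" "g2 = word_eval G w2 x y" by blast
      then have "g1 \<otimes> g2 = word_eval G (w1 @ w2) x y" using x y by (simp add: word_eval_append)
      then show ?case by blast
    qed
  qed
next
  have letter: "eval_letter G x y l \<in> generate G {x, y}" for l
    by (cases "(G, x, y, l)" rule: eval_letter.cases) (auto intro: generate.incl generate.inv)
  show "range (\<lambda>w. word_eval G w x y) \<subseteq> generate G {x, y}"
  proof clarify
    fix w show "word_eval G w x y \<in> generate G {x, y}"
      by (induction w) (auto intro: generate.one generate.eng letter)
  qed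
qed

lemma normal_closure_normal:
  assumes "S \<subseteq> carrier G"
  shows "normal_closure G S \<lhd> G"
  unfolding normal_closure_def
proof (rule normal_generateI)
  show "{g \<otimes> s \<otimes> inv g |g s. g \<in> carrier G \<and> s \<in> S} \<subseteq> carrier G"
    using assms by auto
next
  fix c g assume "c \<in> {g \<otimes> s \<otimes> inv g |g s. g \<in> carrier G \<and> s \<in> S}" and g: "g \<in> carrier G"
  then obtain g' s where c: "c = g' \<otimes> s \<otimes> inv g'" "g' \<in> carrier G" "s \<in> S" by blast
  then have "g \<otimes> c \<otimes> inv g = (g \<otimes> g') \<otimes> s \<otimes> inv (g \<otimes> g')"
    using assms g by (auto simp: m_assoc inv_mult_group)
  then show "g \<otimes> c \<otimes> inv g \<in> {g \<otimes> s \<otimes> inv g |g s. g \<in> carrier G \<and> s \<in> S}"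
    using c g by blast
qed

lemma subset_normal_closure:
  assumes "S \<subseteq> carrier G"
  shows "S \<subseteq> normal_closure G S"
proof
  fix s assume "s \<in> S"
  then have "s = \<one> \<otimes> s \<otimes> inv \<one>" using assms by auto
  with \<open>s \<in> S\<close> show "s \<in> normal_closure G S"
    unfolding normal_closure_def by (blast intro: generate.incl)
qed

lemma normal_closure_minimal:
  assumes "N \<lhd> G" and "S \<subseteq> N"
  shows "normal_closure G S \<subseteq> N"
  unfolding normal_closure_def
proof (rule generate_subgroup_incl)
  show "subgroup N G" using assms(1) by (rule normal_imp_subgroup)
  show "{g \<otimes> s \<otimes> inv g |g s. g \<in> carrier G \<and> s \<in> S} \<subseteq> N"
    using assms by (auto simp: normal_inv_iff)
qed

lemma word_map_hom:
  assumes "group H"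
    and x: "x \<in> carrier G" and y: "y \<in> carrier G"
    and x': "x' \<in> carrier H" and y': "y' \<in> carrier H"
    and generated: "carrier G = range (\<lambda>w. word_eval G w x y)"
    and compatible: "\<And>w1 w2. word_eval G w1 x y = word_eval G w2 x y \<Longrightarrow>
                                word_eval H w1 x' y' = word_eval H w2 x' y'"
  obtains \<pi> where "\<pi> \<in> hom G H" and "\<And>w. \<pi> (word_eval G w x y) = word_eval H w x' y'"
proof -
  interpret H: group H by fact
  define \<pi> where "\<pi> g = word_eval H (SOME w. g = word_eval G w x y) x' y'" for g
  have \<pi>_word: "\<pi> (word_eval G w x y) = word_eval H w x' y'" for w
    unfolding \<pi>_def by (rule compatible[symmetric], rule someI[of _ w]) (rule refl)
  have "\<pi> \<in> hom G H"
  proof (rule homI)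
    fix g assume "g \<in> carrier G"
    then obtain w where "g = word_eval G w x y" using generated by blast
    then show "\<pi> g \<in> carrier H" using x' y' by (simp add: \<pi>_word)
  next
    fix g1 g2 assume "g1 \<in> carrier G" "g2 \<in> carrier G"
    then obtain w1 w2 where "g1 = word_eval G w1 x y" "g2 = word_eval G w2 x y"
      using generated by blast
    then show "\<pi> (g1 \<otimes> g2) = \<pi> g1 \<otimes>\<^bsub>H\<^esub> \<pi> g2"
      using x y x' y' \<pi>_word[of "w1 @ w2"]
      by (simp add: \<pi>_word word_eval_append H.word_eval_append)
  qed
  with \<pi>_word that show ?thesis by blast
qed

end

lemma (in group_hom) hom_word_eval:
  assumes "x \<in> carrier G" "y \<in> carrier G"
  shows "h (word_eval G w x y) = word_eval H w (h x) (h y)"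
proof -
  have "h (eval_letter G x y l) = eval_letter H (h x) (h y) l" for l
    using assms by (cases "(G, x, y, l)" rule: eval_letter.cases) auto
  then show ?thesis using assms by (induction w) auto
qed

section \<open>Groups satisfying the relations of SL(2,Z)\<close>

definition U_of :: "('g, 'm) monoid_scheme \<Rightarrow> 'g \<Rightarrow> 'g \<Rightarrow> 'g" where
  "U_of G h v = inv\<^bsub>G\<^esub> v \<otimes>\<^bsub>G\<^esub> h"

definition V_of :: "('g, 'm) monoid_scheme \<Rightarrow> 'g \<Rightarrow> 'g \<Rightarrow> 'g" where
  "V_of G h v = inv\<^bsub>G\<^esub> h \<otimes>\<^bsub>G\<^esub> v \<otimes>\<^bsub>G\<^esub> inv\<^bsub>G\<^esub> h"

definition sl2_relators :: "('g, 'm) monoid_scheme \<Rightarrow> 'g \<Rightarrow> 'g \<Rightarrow> 'g set" where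
  "sl2_relators G h v =
     {V_of G h v [^]\<^bsub>G\<^esub> (2::nat) \<otimes>\<^bsub>G\<^esub> U_of G h v [^]\<^bsub>G\<^esub> (3::nat), V_of G h v [^]\<^bsub>G\<^esub> (4::nat)}"

lemma (in group) U_of_closed [simp]: "h \<in> carrier G \<Longrightarrow> v \<in> carrier G \<Longrightarrow> U_of G h v \<in> carrier G"
  and V_of_closed [simp]: "h \<in> carrier G \<Longrightarrow> v \<in> carrier G \<Longrightarrow> V_of G h v \<in> carrier G"
  by (simp_all add: U_of_def V_of_def)

lemma (in group) sl2_relators_closed:
  "h \<in> carrier G \<Longrightarrow> v \<in> carrier G \<Longrightarrow> sl2_relators G h v \<subseteq> carrier G"
  by (simp add: sl2_relators_def)

lemma (in group_hom) image_sl2_relators: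
  assumes "x \<in> carrier G" "y \<in> carrier G"
  shows "h ` sl2_relators G x y = sl2_relators H (h x) (h y)"
  using assms by (simp add: sl2_relators_def U_of_def V_of_def hom_nat_pow)

(* (e, k, W, f) stands for V^(2e) U^k (V U^(t1+1)) ... (V U^(tn+1)) V^f, where W = [t1, ..., tn]
   and k \<le> 2: the normal form of PSL(2,Z) = Z/2 * Z/3, lifted through the central V^2 *)
type_synonym nform = "bool \<times> nat \<times> bool list \<times> bool"

fun nf_word :: "('g, 'm) monoid_scheme \<Rightarrow> 'g \<Rightarrow> 'g \<Rightarrow> bool list \<Rightarrow> 'g" where
  "nf_word G U V [] = \<one>\<^bsub>G\<^esub>"
| "nf_word G U V (t # W) = V \<otimes>\<^bsub>G\<^esub> U [^]\<^bsub>G\<^esub> (if t then 2 else 1 :: nat) \<otimes>\<^bsub>G\<^esub> nf_word G U V W"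

fun nf_val :: "('g, 'm) monoid_scheme \<Rightarrow> 'g \<Rightarrow> 'g \<Rightarrow> nform \<Rightarrow> 'g" where
  "nf_val G U V (e, k, W, f) =
     V [^]\<^bsub>G\<^esub> (if e then 2 else 0 :: nat) \<otimes>\<^bsub>G\<^esub> U [^]\<^bsub>G\<^esub> k \<otimes>\<^bsub>G\<^esub> nf_word G U V W
       \<otimes>\<^bsub>G\<^esub> V [^]\<^bsub>G\<^esub> (if f then 1 else 0 :: nat)"

fun nf_mul_U :: "nform \<Rightarrow> nform" where
  "nf_mul_U (e, k, W, f) = (if k < 2 then (e, k + 1, W, f) else (\<not> e, 0, W, f))"

fun nf_mul_V :: "nform \<Rightarrow> nform" where
  "nf_mul_V (e, Suc k, W, f) = (e, 0, (k \<noteq> 0) # W, f)"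
| "nf_mul_V (e, 0, t # W, f) = (\<not> e, if t then 2 else 1, W, f)"
| "nf_mul_V (e, 0, [], f) = (if f then (\<not> e, 0, [], False) else (e, 0, [], True))"

(* left multiplication by h = V U^2, v = V U, h^-1 = U V and v^-1 = U^2 V *)
fun nf_mul_letter :: "letter \<times> bool \<Rightarrow> nform \<Rightarrow> nform" where
  "nf_mul_letter (LA, False) d = nf_mul_V (nf_mul_U (nf_mul_U d))"
| "nf_mul_letter (LB, False) d = nf_mul_V (nf_mul_U d)"
| "nf_mul_letter (LA, True) d = nf_mul_U (nf_mul_V d)"
| "nf_mul_letter (LB, True) d = nf_mul_U (nf_mul_U (nf_mul_V d))"

fun nf :: "word \<Rightarrow> nform" where
  "nf [] = (False, 0, [], False)"
| "nf (l # w) = nf_mul_letter l (nf w)"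

lemma nf_mul_U_exponent_le: "fst (snd (nf_mul_U d)) \<le> 2"
  by (cases d) auto

lemma nf_mul_V_exponent_le: "fst (snd d) \<le> 2 \<Longrightarrow> fst (snd (nf_mul_V d)) \<le> 2"
  by (cases d rule: nf_mul_V.cases) auto

lemma nf_exponent_le: "fst (snd (nf w)) \<le> 2"
proof (induction w)
  case (Cons l w)
  then show ?case
    by (cases "(l, nf w)" rule: nf_mul_letter.cases)
      (auto intro!: nf_mul_U_exponent_le nf_mul_V_exponent_le)
qed simp

locale sl2_relations = group G for G (structure) +
  fixes h v
  assumes h_closed [simp]: "h \<in> carrier G" and v_closed [simp]: "v \<in> carrier G"
    and relators_trivial: "sl2_relators G h v \<subseteq> {\<one>}"
begin

abbreviation "U \<equiv> U_of G h v"
abbreviation "V \<equiv> V_of G h v"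

lemma U_closed [simp]: "U \<in> carrier G" and V_closed [simp]: "V \<in> carrier G"
  by simp_all

lemma VVUUU: "V \<otimes> (V \<otimes> (U \<otimes> (U \<otimes> U))) = \<one>"
  and VVVV: "V \<otimes> (V \<otimes> (V \<otimes> V)) = \<one>"
  using relators_trivial by (simp_all add: sl2_relators_def numeral_eq_Suc m_assoc)

lemma VVVV_left [simp]: "x \<in> carrier G \<Longrightarrow> V \<otimes> (V \<otimes> (V \<otimes> (V \<otimes> x))) = x"
  using VVVV by (simp add: m_assoc[symmetric])

lemma UUU_left [simp]: "x \<in> carrier G \<Longrightarrow> U \<otimes> (U \<otimes> (U \<otimes> x)) = V \<otimes> (V \<otimes> x)"
proof -
  assume x: "x \<in> carrier G"
  have "U \<otimes> (U \<otimes> U) = V \<otimes> (V \<otimes> (V \<otimes> V)) \<otimes> (U \<otimes> (U \<otimes> U))"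
    by (simp add: VVVV)
  also have "\<dots> = V \<otimes> V \<otimes> (V \<otimes> (V \<otimes> (U \<otimes> (U \<otimes> U))))"
    by (simp add: m_assoc)
  finally have "U \<otimes> (U \<otimes> U) = V \<otimes> V"
    by (simp add: VVUUU)
  then show ?thesis using x by (metis U_closed V_closed m_assoc m_closed)
qed

lemma U_VV_left [simp]: "x \<in> carrier G \<Longrightarrow> U \<otimes> (V \<otimes> (V \<otimes> x)) = V \<otimes> (V \<otimes> (U \<otimes> x))"
  by (metis UUU_left U_closed m_closed)

lemma inv_h: "inv h = U \<otimes> V" and inv_v: "inv v = U \<otimes> (U \<otimes> V)"
  by (simp_all add: U_of_def V_of_def m_assoc)

lemma h_eq: "h = V \<otimes> (U \<otimes> U)" and v_eq: "v = V \<otimes> U"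
proof -
  have "inv (U \<otimes> V) = V \<otimes> (U \<otimes> U)" and "inv (U \<otimes> (U \<otimes> V)) = V \<otimes> U"
    by (rule inv_equality; simp add: m_assoc VVVV)+
  then show "h = V \<otimes> (U \<otimes> U)" and "v = V \<otimes> U"
    by (metis inv_h inv_inv h_closed, metis inv_v inv_inv v_closed)
qed

lemma eval_letter_UV:
  "eval_letter G h v (LA, False) = V \<otimes> (U \<otimes> U)" "eval_letter G h v (LB, False) = V \<otimes> U"
  "eval_letter G h v (LA, True) = U \<otimes> V" "eval_letter G h v (LB, True) = U \<otimes> (U \<otimes> V)"
  unfolding eval_letter.simps by (fact h_eq v_eq inv_h inv_v)+

lemma nf_word_closed [simp]: "nf_word G U V W \<in> carrier G"
  by (induction W) auto

lemma nf_val_closed [simp]: "nf_val G U V d \<in> carrier G"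
  by (cases d) simp

lemma nf_mul_U_val: "fst (snd d) \<le> 2 \<Longrightarrow> U \<otimes> nf_val G U V d = nf_val G U V (nf_mul_U d)"
  by (cases d) (auto simp: le_Suc_eq numeral_eq_Suc m_assoc)

lemma nf_mul_V_val: "fst (snd d) \<le> 2 \<Longrightarrow> V \<otimes> nf_val G U V d = nf_val G U V (nf_mul_V d)"
  by (cases d rule: nf_mul_V.cases; auto simp: le_Suc_eq numeral_eq_Suc m_assoc VVVV)

lemma word_eval_eq_nf_val: "word_eval G w h v = nf_val G U V (nf w)"
proof (induction w)
  case Nil
  then show ?case by simp
next
  case (Cons l w)
  have "word_eval G (l # w) h v = eval_letter G h v l \<otimes> nf_val G U V (nf w)"
    using Cons by simp
  also have "\<dots> = nf_val G U V (nf_mul_letter l (nf w))"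
    using nf_exponent_le[of w] nf_mul_U_exponent_le nf_mul_V_exponent_le
    by (cases "(l, nf w)" rule: nf_mul_letter.cases)
      (simp_all del: eval_letter.simps add: eval_letter_UV m_assoc nf_mul_U_val nf_mul_V_val)
  finally show ?case by simp
qed

end

lemma (in sl2_relations) word_eval_eq_one_if_nf_Nil: "nf w = nf [] \<Longrightarrow> word_eval G w h v = \<one>"
  by (simp add: word_eval_eq_nf_val)

lemma (in group) word_eval_in_normal_closure:
  assumes h: "h \<in> carrier G" and v: "v \<in> carrier G" and trivial: "nf w = nf []"
  shows "word_eval G w h v \<in> normal_closure G (sl2_relators G h v)"
proof -
  define N where "N = normal_closure G (sl2_relators G h v)"
  have relators_N: "sl2_relators G h v \<subseteq> N"
    unfolding N_def by (rule subset_normal_closure[OF sl2_relators_closed[OF h v]])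
  interpret N: normal N G
    unfolding N_def by (rule normal_closure_normal[OF sl2_relators_closed[OF h v]])
  interpret quotient: group_hom G "G Mod N" "r_coset G N"
    by (simp add: group_hom_def group_hom_axioms_def N.factorgroup_is_group N.r_coset_hom_Mod)
  have "r_coset G N ` sl2_relators G h v \<subseteq> {N}"
    using relators_N sl2_relators_closed[OF h v] coset_join2[OF _ N.subgroup_axioms] by auto
  then have "sl2_relations (G Mod N) (N #> h) (N #> v)"
    using h v by unfold_locales (simp_all add: quotient.image_sl2_relators)
  then have "word_eval (G Mod N) w (N #> h) (N #> v) = N"
    using sl2_relations.word_eval_eq_one_if_nf_Nil[OF _ trivial] by fastforce
  then have "N #> word_eval G w h v = N"
    using h v by (simp add: quotient.hom_word_eval)
  then show ?thesis
    unfolding N_def[symmetric] using rcos_self[OF word_eval_closed[OF h v, of w] N.subgroup_axioms] by simp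
qed

lemma (in group_hom) kernel_eq_normal_closure_sl2_relators:
  assumes x: "x \<in> carrier G" and y: "y \<in> carrier G"
    and generated: "carrier G = range (\<lambda>w. word_eval G w x y)"
    and relations: "sl2_relations H (h x) (h y)"
    and faithful: "\<And>w. word_eval H w (h x) (h y) = \<one>\<^bsub>H\<^esub> \<Longrightarrow> nf w = nf []"
  shows "kernel G H h = normal_closure G (sl2_relators G x y)"
proof
  have "sl2_relators G x y \<subseteq> kernel G H h"
    using G.sl2_relators_closed[OF x y] image_sl2_relators[OF x y] sl2_relations.relators_trivial[OF relations]
    by (auto simp: kernel_def)
  then show "normal_closure G (sl2_relators G x y) \<subseteq> kernel G H h"
    by (rule G.normal_closure_minimal[OF normal_kernel])
next
  show "kernel G H h \<subseteq> normal_closure G (sl2_relators G x y)"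
  proof
    fix g assume g: "g \<in> kernel G H h"
    then obtain w where w: "g = word_eval G w x y"
      using generated by (auto simp: kernel_def)
    with g have "word_eval H w (h x) (h y) = \<one>\<^bsub>H\<^esub>"
      using x y by (simp add: kernel_def hom_word_eval)
    then show "g \<in> normal_closure G (sl2_relators G x y)"
      unfolding w by (rule G.word_eval_in_normal_closure[OF x y faithful])
  qed
qed

section \<open>The groups Gamma(sigma)\<close>

abbreviation Sym_plane :: "(real \<times> real \<Rightarrow> real \<times> real) monoid" where
  "Sym_plane \<equiv> BijGroup UNIV"

definition hmap_inv :: "(real \<Rightarrow> real) \<Rightarrow> real \<times> real \<Rightarrow> real \<times> real" where
  "hmap_inv \<sigma> = (\<lambda>(x, y). (x - inv_into UNIV \<sigma> y, y))"

definition vmap_inv :: "(real \<Rightarrow> real) \<Rightarrow> real \<times> real \<Rightarrow> real \<times> real" where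
  "vmap_inv \<sigma> = (\<lambda>(x, y). (x, y - \<sigma> x))"

fun letter_map :: "(real \<Rightarrow> real) \<Rightarrow> letter \<times> bool \<Rightarrow> real \<times> real \<Rightarrow> real \<times> real" where
  "letter_map \<sigma> (LA, False) = hmap \<sigma>"
| "letter_map \<sigma> (LA, True) = hmap_inv \<sigma>"
| "letter_map \<sigma> (LB, False) = vmap \<sigma>"
| "letter_map \<sigma> (LB, True) = vmap_inv \<sigma>"

lemma inv_hmap: "inv_into UNIV (hmap \<sigma>) = hmap_inv \<sigma>"
  by (rule inv_equality) (auto simp: hmap_def hmap_inv_def)

lemma inv_vmap: "inv_into UNIV (vmap \<sigma>) = vmap_inv \<sigma>"
  by (rule inv_equality) (auto simp: vmap_def vmap_inv_def)

lemma hmap_Bij: "hmap \<sigma> \<in> Bij UNIV"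
proof -
  have "bij (hmap \<sigma>)"
    by (rule o_bij[where g = "hmap_inv \<sigma>"]) (auto simp: fun_eq_iff hmap_def hmap_inv_def)
  then show ?thesis by (simp add: Bij_def)
qed

lemma vmap_Bij: "vmap \<sigma> \<in> Bij UNIV"
proof -
  have "bij (vmap \<sigma>)"
    by (rule o_bij[where g = "vmap_inv \<sigma>"]) (auto simp: fun_eq_iff vmap_def vmap_inv_def)
  then show ?thesis by (simp add: Bij_def)
qed

lemma carrier_Gamma: "carrier (Gamma \<sigma>) = generate Sym_plane {hmap \<sigma>, vmap \<sigma>}"
  by (simp add: Gamma_def)

lemma Gamma_subgroup: "subgroup (carrier (Gamma \<sigma>)) Sym_plane"
  unfolding carrier_Gamma
  by (rule group.generate_is_subgroup[OF group_BijGroup]) (simp add: BijGroup_def hmap_Bij vmap_Bij)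

lemma group_Gamma: "group (Gamma \<sigma>)"
  using group.subgroup_imp_group[OF group_BijGroup Gamma_subgroup] by (simp add: Gamma_def)

lemma Gamma_Bij: "f \<in> carrier (Gamma \<sigma>) \<Longrightarrow> f \<in> Bij UNIV"
  using subgroup.subset[OF Gamma_subgroup] by (auto simp: BijGroup_def)

lemma Sym_plane_mult: "f \<in> Bij UNIV \<Longrightarrow> g \<in> Bij UNIV \<Longrightarrow> f \<otimes>\<^bsub>Sym_plane\<^esub> g = f \<circ> g"
  by (simp add: BijGroup_def compose_def comp_def restrict_UNIV)

lemma Gamma_mult:
  assumes "f \<in> carrier (Gamma \<sigma>)" and "g \<in> carrier (Gamma \<sigma>)"
  shows "f \<otimes>\<^bsub>Gamma \<sigma>\<^esub> g = f \<circ> g"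
  using Sym_plane_mult[OF assms[THEN Gamma_Bij]] by (simp add: Gamma_def)

lemma Gamma_one: "\<one>\<^bsub>Gamma \<sigma>\<^esub> = id"
  by (simp add: Gamma_def BijGroup_def id_def restrict_UNIV)

lemma Gamma_inv: "f \<in> carrier (Gamma \<sigma>) \<Longrightarrow> inv\<^bsub>Gamma \<sigma>\<^esub> f = inv_into UNIV f"
  using group.m_inv_consistent[OF group_BijGroup Gamma_subgroup] Gamma_Bij
  by (simp add: Gamma_def inv_BijGroup restrict_UNIV)

lemma hmap_in_Gamma: "hmap \<sigma> \<in> carrier (Gamma \<sigma>)" and vmap_in_Gamma: "vmap \<sigma> \<in> carrier (Gamma \<sigma>)"
  by (simp_all add: carrier_Gamma generate.incl)

abbreviation shear_word :: "(real \<Rightarrow> real) \<Rightarrow> word \<Rightarrow> real \<times> real \<Rightarrow> real \<times> real" where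
  "shear_word \<sigma> w \<equiv> word_eval (Gamma \<sigma>) w (hmap \<sigma>) (vmap \<sigma>)"

lemma carrier_Gamma_eq_words: "carrier (Gamma \<sigma>) = range (shear_word \<sigma>)"
proof -
  have "carrier (Gamma \<sigma>) = generate (Gamma \<sigma>) {hmap \<sigma>, vmap \<sigma>}"
    using group.generate_consistent[OF group_BijGroup _ Gamma_subgroup] hmap_in_Gamma vmap_in_Gamma
    by (simp add: Gamma_def)
  then show ?thesis
    by (simp add: group.generate_eq_word_evals[OF group_Gamma hmap_in_Gamma vmap_in_Gamma])
qed

lemma shear_word_in_Gamma: "shear_word \<sigma> w \<in> carrier (Gamma \<sigma>)"
  by (simp add: carrier_Gamma_eq_words)

lemma shear_word_append: "shear_word \<sigma> (w1 @ w2) = shear_word \<sigma> w1 \<circ> shear_word \<sigma> w2"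
  by (simp add: group.word_eval_append[OF group_Gamma hmap_in_Gamma vmap_in_Gamma]
      Gamma_mult shear_word_in_Gamma)

lemma eval_letter_Gamma: "eval_letter (Gamma \<sigma>) (hmap \<sigma>) (vmap \<sigma>) l = letter_map \<sigma> l"
  by (cases "(\<sigma>, l)" rule: letter_map.cases)
    (simp_all add: Gamma_inv hmap_in_Gamma vmap_in_Gamma inv_hmap inv_vmap)

lemma letter_map_in_Gamma: "letter_map \<sigma> l \<in> carrier (Gamma \<sigma>)"
  using group.eval_letter_closed[OF group_Gamma hmap_in_Gamma vmap_in_Gamma]
  by (simp add: eval_letter_Gamma)

lemma shear_word_single: "shear_word \<sigma> [l] = letter_map \<sigma> l"
  using monoid.r_one[OF group.is_monoid[OF group_Gamma] letter_map_in_Gamma]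
  by (simp add: eval_letter_Gamma)

lemma shear_word_Cons: "shear_word \<sigma> (l # w) = letter_map \<sigma> l \<circ> shear_word \<sigma> w"
  using shear_word_append[of \<sigma> "[l]" w] by (simp only: shear_word_single append.simps)

lemma shear_word_snoc: "shear_word \<sigma> (w @ [l]) = shear_word \<sigma> w \<circ> letter_map \<sigma> l"
  by (simp only: shear_word_append shear_word_single)

section \<open>The morphism onto Gamma(id)\<close>

lemma letter_map_eq_id_at_fixed_points:
  assumes "inj \<sigma>" and "\<sigma> x = x" and "\<sigma> y = y"
  shows "letter_map \<sigma> l (x, y) = letter_map id l (x, y)"
proof -
  have "inv_into UNIV \<sigma> y = y" using assms by (simp add: inv_f_eq)
  then show ?thesis using assms(2)
    by (cases "(\<sigma>, l)" rule: letter_map.cases)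
      (simp_all add: hmap_def hmap_inv_def vmap_def vmap_inv_def)
qed

lemma letter_map_id_Ints: "x \<in> \<int> \<Longrightarrow> y \<in> \<int> \<Longrightarrow> letter_map id l (x, y) \<in> \<int> \<times> \<int>"
  by (cases "(id :: real \<Rightarrow> real, l)" rule: letter_map.cases)
    (simp_all add: hmap_def hmap_inv_def vmap_def vmap_inv_def)

lemma letter_map_id_abs_le:
  "letter_map id l (x, y) = (x', y') \<Longrightarrow> \<bar>x'\<bar> \<le> \<bar>x\<bar> + \<bar>y\<bar> \<and> \<bar>y'\<bar> \<le> \<bar>x\<bar> + \<bar>y\<bar>"
  by (cases "(id :: real \<Rightarrow> real, l)" rule: letter_map.cases)
    (auto simp: hmap_def hmap_inv_def vmap_def vmap_inv_def)

lemma shear_word_eq_id_on_Ints: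
  assumes "inj \<sigma>" and Ints_fixed: "\<And>n::int. \<sigma> (of_int n) = of_int n"
  shows "x \<in> \<int> \<Longrightarrow> y \<in> \<int> \<Longrightarrow> shear_word \<sigma> w (x, y) = shear_word id w (x, y)"
proof (induction w arbitrary: x y rule: rev_induct)
  case Nil
  show ?case by (simp add: Gamma_one)
next
  case (snoc l w)
  obtain x' y' where xy': "letter_map id l (x, y) = (x', y')" by fastforce
  have "\<sigma> x = x" "\<sigma> y = y" using snoc.prems Ints_fixed by (auto elim: Ints_cases)
  then have xy'_\<sigma>: "letter_map \<sigma> l (x, y) = (x', y')"
    using letter_map_eq_id_at_fixed_points[OF assms(1)] xy' by simp
  have "x' \<in> \<int>" "y' \<in> \<int>"
    using letter_map_id_Ints[OF snoc.prems, of l] xy' by auto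
  then have "shear_word \<sigma> w (x', y') = shear_word id w (x', y')"
    by (rule snoc.IH)
  then show ?case
    by (simp only: shear_word_snoc comp_apply xy' xy'_\<sigma>)
qed

lemma shear_word_eq_id_near_0:
  assumes "inj \<sigma>" and "\<epsilon> > 0" and fixed_near_0: "\<And>x. \<bar>x\<bar> < \<epsilon> \<Longrightarrow> \<sigma> x = x"
  shows "\<exists>\<delta>>0. \<forall>x y. \<bar>x\<bar> < \<delta> \<longrightarrow> \<bar>y\<bar> < \<delta> \<longrightarrow> shear_word \<sigma> w (x, y) = shear_word id w (x, y)"
proof (induction w rule: rev_induct)
  case Nil
  show ?case by (auto simp: Gamma_one intro: exI[of _ 1])
next
  case (snoc l w)
  then obtain \<delta> where "\<delta> > 0"
    and \<delta>: "\<And>x y. \<bar>x\<bar> < \<delta> \<Longrightarrow> \<bar>y\<bar> < \<delta> \<Longrightarrow> shear_word \<sigma> w (x, y) = shear_word id w (x, y)"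
    by blast
  define \<delta>' where "\<delta>' = min (\<delta> / 2) \<epsilon>"
  have "\<delta>' > 0" using \<open>\<delta> > 0\<close> \<open>\<epsilon> > 0\<close> by (simp add: \<delta>'_def)
  moreover have "shear_word \<sigma> (w @ [l]) (x, y) = shear_word id (w @ [l]) (x, y)"
    if "\<bar>x\<bar> < \<delta>'" and "\<bar>y\<bar> < \<delta>'" for x y
  proof -
    obtain x' y' where xy': "letter_map id l (x, y) = (x', y')" by fastforce
    have "\<bar>x'\<bar> < \<delta>" "\<bar>y'\<bar> < \<delta>"
      using letter_map_id_abs_le[OF xy'] that by (auto simp: \<delta>'_def)
    moreover have "letter_map \<sigma> l (x, y) = (x', y')"
      using letter_map_eq_id_at_fixed_points[OF assms(1)] fixed_near_0 that xy' by (simp add: \<delta>'_def)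
    ultimately show ?thesis using xy' \<delta> by (simp add: shear_word_snoc)
  qed
  ultimately show ?case by blast
qed

lemma linear_shear_word_id: "linear (shear_word id w)"
proof (induction w)
  case Nil
  show ?case using linear_id by (simp add: Gamma_one id_def)
next
  case (Cons l w)
  have "linear (letter_map id l)"
    by (cases "(id :: real \<Rightarrow> real, l)" rule: letter_map.cases)
      (auto intro!: linearI simp: hmap_def hmap_inv_def vmap_def vmap_inv_def algebra_simps)
  then show ?case
    unfolding shear_word_Cons by (rule linear_compose[OF Cons.IH])
qed

lemma linear_eq_on_axes:
  fixes f g :: "real \<times> real \<Rightarrow> 'a::real_vector"
  assumes "linear f" and "linear g" and "t \<noteq> 0"
    and "f (t, 0) = g (t, 0)" and "f (0, t) = g (0, t)"
  shows "f = g"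
proof
  have expand: "f' (x, y) = (x / t) *\<^sub>R f' (t, 0) + (y / t) *\<^sub>R f' (0, t)"
    if "linear f'" for f' :: "real \<times> real \<Rightarrow> 'a" and x y
  proof -
    have xy: "(x, y) = (x / t) *\<^sub>R (t, 0) + (y / t) *\<^sub>R (0, t)"
      using \<open>t \<noteq> 0\<close> by simp
    show ?thesis using that by (subst xy) (simp only: linear_add linear_scale)
  qed
  fix p :: "real \<times> real"
  obtain x y where "p = (x, y)" by fastforce
  then show "f p = g p"
    using expand[OF assms(1), of x y] expand[OF assms(2), of x y] assms(4,5) by simp
qed

lemma shear_word_id_cong:
  assumes "inj \<sigma>"
    and fixed_points: "(\<exists>\<epsilon>>0. \<forall>x. \<bar>x\<bar> < \<epsilon> \<longrightarrow> \<sigma> x = x) \<or> (\<forall>n::int. \<sigma> (of_int n) = of_int n)"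
    and eq: "shear_word \<sigma> w1 = shear_word \<sigma> w2"
  shows "shear_word id w1 = shear_word id w2"
proof -
  obtain t where "t \<noteq> 0" and agree: "\<And>w p. w \<in> {w1, w2} \<Longrightarrow> p \<in> {(t, 0), (0, t)} \<Longrightarrow>
                                           shear_word \<sigma> w p = shear_word id w p"
    using fixed_points
  proof (elim disjE exE conjE)
    fix \<epsilon> :: real assume "\<epsilon> > 0" "\<forall>x. \<bar>x\<bar> < \<epsilon> \<longrightarrow> \<sigma> x = x"
    then obtain \<delta>1 \<delta>2 where "\<delta>1 > 0" "\<delta>2 > 0"
      and "\<forall>x y. \<bar>x\<bar> < \<delta>1 \<longrightarrow> \<bar>y\<bar> < \<delta>1 \<longrightarrow> shear_word \<sigma> w1 (x, y) = shear_word id w1 (x, y)"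
      and "\<forall>x y. \<bar>x\<bar> < \<delta>2 \<longrightarrow> \<bar>y\<bar> < \<delta>2 \<longrightarrow> shear_word \<sigma> w2 (x, y) = shear_word id w2 (x, y)"
      using shear_word_eq_id_near_0[OF assms(1)] by metis
    then show ?thesis
      by (intro that[of "min \<delta>1 \<delta>2 / 2"]) auto
  next
    assume "\<forall>n::int. \<sigma> (of_int n) = of_int n"
    then show ?thesis
      using shear_word_eq_id_on_Ints[OF assms(1)] by (intro that[of 1]) auto
  qed
  show ?thesis
    using linear_eq_on_axes[OF linear_shear_word_id linear_shear_word_id \<open>t \<noteq> 0\<close>] agree eq
    by (metis insertCI)
qed

lemma shear_word_hom:
  assumes "inj \<sigma>"
    and "(\<exists>\<epsilon>>0. \<forall>x. \<bar>x\<bar> < \<epsilon> \<longrightarrow> \<sigma> x = x) \<or> (\<forall>n::int. \<sigma> (of_int n) = of_int n)"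
  obtains \<pi> where "\<pi> \<in> hom (Gamma \<sigma>) (Gamma id)" and "\<And>w. \<pi> (shear_word \<sigma> w) = shear_word id w"
  using group.word_map_hom[OF group_Gamma group_Gamma hmap_in_Gamma vmap_in_Gamma
      hmap_in_Gamma vmap_in_Gamma carrier_Gamma_eq_words shear_word_id_cong[OF assms]] that
  by blast

section \<open>Gamma(id) is SL(2,Z)\<close>

definition Umap :: "real \<times> real \<Rightarrow> real \<times> real" where
  "Umap = (\<lambda>(x, y). (x + y, - x))"

definition Vmap :: "real \<times> real \<Rightarrow> real \<times> real" where
  "Vmap = (\<lambda>(x, y). (- y, x))"

lemma Gamma_comp_closed [simp]:
  "f \<in> carrier (Gamma \<sigma>) \<Longrightarrow> g \<in> carrier (Gamma \<sigma>) \<Longrightarrow> f \<circ> g \<in> carrier (Gamma \<sigma>)"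
  using monoid.m_closed[OF group.is_monoid[OF group_Gamma]] by (simp add: Gamma_mult)

lemma id_in_Gamma [simp]: "id \<in> carrier (Gamma \<sigma>)"
  using monoid.one_closed[OF group.is_monoid[OF group_Gamma]] by (simp add: Gamma_one)

lemma funpow_in_Gamma [simp]: "f \<in> carrier (Gamma \<sigma>) \<Longrightarrow> f ^^ n \<in> carrier (Gamma \<sigma>)"
  by (induction n) simp_all

lemma Gamma_pow: "f \<in> carrier (Gamma \<sigma>) \<Longrightarrow> f [^]\<^bsub>Gamma \<sigma>\<^esub> (n::nat) = f ^^ n"
  by (induction n) (simp_all add: Gamma_one Gamma_mult funpow_Suc_right del: funpow.simps(2))

lemma Gamma_inv_hmap: "inv\<^bsub>Gamma \<sigma>\<^esub> (hmap \<sigma>) = hmap_inv \<sigma>"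
  and Gamma_inv_vmap: "inv\<^bsub>Gamma \<sigma>\<^esub> (vmap \<sigma>) = vmap_inv \<sigma>"
  by (simp_all add: Gamma_inv hmap_in_Gamma vmap_in_Gamma inv_hmap inv_vmap)

lemma U_of_Gamma_id: "U_of (Gamma id) (hmap id) (vmap id) = Umap"
  using Gamma_mult[OF letter_map_in_Gamma[of id "(LB, True)"] hmap_in_Gamma]
  by (auto simp: U_of_def Gamma_inv_vmap Umap_def hmap_def vmap_inv_def fun_eq_iff)

lemma V_of_Gamma_id: "V_of (Gamma id) (hmap id) (vmap id) = Vmap"
  using letter_map_in_Gamma[of id "(LA, True)"] vmap_in_Gamma[of id]
  by (simp add: V_of_def Gamma_inv_hmap Gamma_mult)
    (auto simp: Vmap_def vmap_def hmap_inv_def fun_eq_iff)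

lemma Umap_in_Gamma [simp]: "Umap \<in> carrier (Gamma id)" and Vmap_in_Gamma [simp]: "Vmap \<in> carrier (Gamma id)"
  using group.U_of_closed[OF group_Gamma] group.V_of_closed[OF group_Gamma] hmap_in_Gamma vmap_in_Gamma
  by (simp_all flip: U_of_Gamma_id V_of_Gamma_id)

lemma sl2_relations_Gamma_id: "sl2_relations (Gamma id) (hmap id) (vmap id)"
proof -
  have "sl2_relators (Gamma id) (hmap id) (vmap id) = {Vmap ^^ 2 \<circ> Umap ^^ 3, Vmap ^^ 4}"
    by (simp add: sl2_relators_def U_of_Gamma_id V_of_Gamma_id Gamma_pow Gamma_mult)
  also have "\<dots> = {\<one>\<^bsub>Gamma id\<^esub>}"
    by (simp add: Gamma_one numeral_eq_Suc fun_eq_iff Umap_def Vmap_def)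
  finally show ?thesis
    by (intro sl2_relations.intro sl2_relations_axioms.intro group_Gamma hmap_in_Gamma vmap_in_Gamma) simp
qed

fun pos_shears :: "bool list \<Rightarrow> real \<times> real \<Rightarrow> real \<times> real" where
  "pos_shears [] = id"
| "pos_shears (t # W) = (if t then (\<lambda>(x, y). (x + y, y)) else (\<lambda>(x, y). (x, x + y))) \<circ> pos_shears W"

lemma pos_shears_ge:
  "0 \<le> x \<Longrightarrow> 0 \<le> y \<Longrightarrow> x \<le> fst (pos_shears W (x, y)) \<and> y \<le> snd (pos_shears W (x, y))"
proof (induction W)
  case (Cons t W)
  then show ?case by (cases "pos_shears W (x, y)") auto
qed simp

lemma pos_shears_grows: "W \<noteq> [] \<Longrightarrow> 3 \<le> fst (pos_shears W (1, 1)) + snd (pos_shears W (1, 1))"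
proof (cases W)
  case (Cons t W')
  obtain p q where pq: "pos_shears W' (1, 1) = (p, q)" by fastforce
  then have "1 \<le> p" "1 \<le> q" using pos_shears_ge[of 1 1 W'] by auto
  then show ?thesis using Cons pq by auto
qed simp

lemma pos_shears_in_Gamma [simp]: "pos_shears W \<in> carrier (Gamma id)"
proof (induction W)
  case (Cons t W)
  have "(if t then (\<lambda>(x, y). (x + y, y)) else (\<lambda>(x, y). (x, x + y))) \<in> carrier (Gamma id)"
    using hmap_in_Gamma[of id] vmap_in_Gamma[of id] by (simp add: hmap_def vmap_def)
  then show ?case
    unfolding pos_shears.simps by (rule Gamma_comp_closed[OF _ Cons.IH])
qed (simp only: pos_shears.simps id_in_Gamma)

lemma nf_word_Gamma_id: "nf_word (Gamma id) Umap Vmap W = pos_shears W"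
proof (induction W)
  case Nil
  then show ?case by (simp add: Gamma_one)
next
  case (Cons t W)
  have "nf_word (Gamma id) Umap Vmap (t # W) = Vmap \<circ> Umap ^^ (if t then 2 else 1) \<circ> pos_shears W"
    unfolding nf_word.simps Cons.IH by (simp add: Gamma_pow Gamma_mult)
  also have "\<dots> = pos_shears (t # W)"
    by (cases t) (auto simp: fun_eq_iff Umap_def Vmap_def numeral_eq_Suc split: prod.splits)
  finally show ?case .
qed

lemma nf_val_Gamma_id:
  "nf_val (Gamma id) Umap Vmap (e, k, W, f) =
     Vmap ^^ (if e then 2 else 0) \<circ> Umap ^^ k \<circ> pos_shears W \<circ> Vmap ^^ (if f then 1 else 0)"
  by (simp add: Gamma_pow nf_word_Gamma_id Gamma_mult)

lemma nf_val_Gamma_id_eq_id: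
  assumes val: "nf_val (Gamma id) Umap Vmap (e, k, W, f) = id" and "k \<le> 2"
  shows "(e, k, W, f) = nf []"
proof -
  let ?M = "\<lambda>p. (Vmap ^^ (if e then 2 else 0)) ((Umap ^^ k) (pos_shears W p))"
  have M: "?M ((Vmap ^^ (if f then 1 else 0)) p) = p" for p
    using val unfolding nf_val_Gamma_id by (metis comp_apply id_apply)
  have M10: "?M (1, 0) = (if f then (0, -1) else (1, 0))"
    using M[of "if f then (0, -1) else (1, 0)"] by (cases f) (simp_all add: Vmap_def)
  have M01: "?M (0, 1) = (if f then (1, 0) else (0, 1))"
    using M[of "if f then (1, 0) else (0, 1)"] by (cases f) (simp_all add: Vmap_def)
  have M11: "?M (1, 1) = (if f then (1, -1) else (1, 1))"
    using M[of "if f then (1, -1) else (1, 1)"] by (cases f) (simp_all add: Vmap_def)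
  obtain a1 a2 where A: "pos_shears W (1, 0) = (a1, a2)" by fastforce
  obtain b1 b2 where B: "pos_shears W (0, 1) = (b1, b2)" by fastforce
  obtain c1 c2 where C: "pos_shears W (1, 1) = (c1, c2)" by fastforce
  have "1 \<le> a1" "0 \<le> a2" "0 \<le> b1" "1 \<le> b2" "1 \<le> c1" "1 \<le> c2"
    using pos_shears_ge[of 1 0 W] pos_shears_ge[of 0 1 W] pos_shears_ge[of 1 1 W] A B C by auto
  moreover have "k = 0 \<or> k = 1 \<or> k = 2" using \<open>k \<le> 2\<close> by auto
  moreover have "W = []"
  proof (rule ccontr)
    assume "W \<noteq> []"
    then have "c1 + c2 \<ge> 3" using pos_shears_grows C by fastforce
    then show False using M10 M01 M11 calculation unfolding A B C
      by (cases e; cases f; auto simp: Umap_def Vmap_def numeral_eq_Suc)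
  qed
  ultimately show ?thesis using M10 M01 M11
    by (cases e; cases f; auto simp: Umap_def Vmap_def numeral_eq_Suc)
qed

lemma nf_eq_Nil_if_shear_word_id: "shear_word id w = id \<Longrightarrow> nf w = nf []"
proof -
  interpret sl2_relations "Gamma id" "hmap id" "vmap id" by (rule sl2_relations_Gamma_id)
  obtain e k W f where nf_w: "nf w = (e, k, W, f)" by (cases "nf w")
  assume "shear_word id w = id"
  then have "nf_val (Gamma id) Umap Vmap (e, k, W, f) = id"
    using word_eval_eq_nf_val[of w] by (simp add: nf_w U_of_Gamma_id V_of_Gamma_id)
  moreover have "k \<le> 2" using nf_exponent_le[of w] by (simp add: nf_w)
  ultimately show "nf w = nf []" unfolding nf_w by (rule nf_val_Gamma_id_eq_id)
qed

theorem proposition2: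
  fixes \<sigma> :: "real \<Rightarrow> real"
  assumes incr: "strict_mono \<sigma>"
    and odd: "\<And>x. \<sigma> (- x) = - \<sigma> x"
    and homeo: "\<exists>\<tau>. homeomorphism UNIV UNIV \<sigma> \<tau>"
    and fix0: "(\<exists>\<epsilon>>0. \<forall>x. \<bar>x\<bar> < \<epsilon> \<longrightarrow> \<sigma> x = x) \<or> (\<forall>n::int. \<sigma> (of_int n) = of_int n)"
  shows "\<exists>\<pi>. \<pi> \<in> hom (Gamma \<sigma>) (Gamma id)
           \<and> \<pi> ` carrier (Gamma \<sigma>) = carrier (Gamma id)
           \<and> (\<forall>w. \<pi> (word_eval (Gamma \<sigma>) w (hmap \<sigma>) (vmap \<sigma>))
                   = word_eval (Gamma id) w (hmap id) (vmap id))
           \<and> (let G = Gamma \<sigma>;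
                  U = inv\<^bsub>G\<^esub> (vmap \<sigma>) \<otimes>\<^bsub>G\<^esub> hmap \<sigma>;
                  V = inv\<^bsub>G\<^esub> (hmap \<sigma>) \<otimes>\<^bsub>G\<^esub> vmap \<sigma> \<otimes>\<^bsub>G\<^esub> inv\<^bsub>G\<^esub> (hmap \<sigma>)
              in kernel G (Gamma id) \<pi>
                 = normal_closure G {V [^]\<^bsub>G\<^esub> (2::nat) \<otimes>\<^bsub>G\<^esub> U [^]\<^bsub>G\<^esub> (3::nat),
                                     V [^]\<^bsub>G\<^esub> (4::nat)})"
proof -
  (* only injectivity of sigma enters *)
  have "inj \<sigma>" using incr by (rule strict_mono_imp_inj_on)
  then obtain \<pi> where hom: "\<pi> \<in> hom (Gamma \<sigma>) (Gamma id)"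
    and \<pi>_word: "\<And>w. \<pi> (shear_word \<sigma> w) = shear_word id w"
    using shear_word_hom fix0 by blast
  interpret group_hom "Gamma \<sigma>" "Gamma id" \<pi>
    by (simp add: group_hom_def group_hom_axioms_def group_Gamma hom)
  have "\<pi> ` carrier (Gamma \<sigma>) = carrier (Gamma id)"
    by (simp add: carrier_Gamma_eq_words image_image \<pi>_word)
  moreover have "\<pi> (hmap \<sigma>) = hmap id" "\<pi> (vmap \<sigma>) = vmap id"
    using \<pi>_word[of "[(LA, False)]"] \<pi>_word[of "[(LB, False)]"] unfolding shear_word_single by simp_all
  then have "kernel (Gamma \<sigma>) (Gamma id) \<pi> = normal_closure (Gamma \<sigma>) (sl2_relators (Gamma \<sigma>) (hmap \<sigma>) (vmap \<sigma>))"
    using kernel_eq_normal_closure_sl2_relators[OF hmap_in_Gamma vmap_in_Gamma carrier_Gamma_eq_words]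
      sl2_relations_Gamma_id nf_eq_Nil_if_shear_word_id by (simp add: Gamma_one)
  ultimately show ?thesis
    unfolding Let_def sl2_relators_def U_of_def V_of_def using hom \<pi>_word by blast
qed

end
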